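(* Let $d\ge1$ and let $\Lambda\subset\mathbb R^d$ be a full-rank lattice with successive minima $\delta_1,\dots,\delta_d$. Then there exists a basis $\boldsymbol v^1,\dots,\boldsymbol v^d$ of $\Lambda$ such that (i) $|\boldsymbol v^s|_2\ll_d\delta_s$ for $s=1,\dots,d$; (ii) $\mathfrak I(\boldsymbol v^s)\subseteq\mathfrak I(\boldsymbol v^{s+1})$ for $s=1,\dots,d-1$.
   Context: For $\boldsymbol v\in\mathbb R^d$, $\mathfrak I(\boldsymbol v):=\{h\in\{1,\dots,d\}: v_h\neq0\}$ is its support. $|\cdot|_2$ is the Euclidean norm. The $s$-th successive minimum of $\Lambda$ is the least $r>0$ such that the Euclidean ball of radius $r$ centred at $0$ contains $s$ linearly independent vectors of $\Lambda$. *)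

theory Defs
  imports "HOL-Analysis.Analysis"
begin

definition supp_vec :: "real^'n \<Rightarrow> 'n set" where
  "supp_vec v = {h. v $ h \<noteq> 0}"

definition lattice_basis :: "(real^'n) set \<Rightarrow> (nat \<Rightarrow> real^'n) \<Rightarrow> bool" where
  "lattice_basis L b \<longleftrightarrow>
     inj_on b {1..CARD('n)} \<and> independent (b ` {1..CARD('n)}) \<and>
     L = {(\<Sum>s=1..CARD('n). of_int (k s) *\<^sub>R b s) | k. True}"

definition full_rank_lattice :: "(real^'n) set \<Rightarrow> bool" where
  "full_rank_lattice L \<longleftrightarrow> (\<exists>b. lattice_basis L b)"

definition succ_min :: "(real^'n) set \<Rightarrow> nat \<Rightarrow> real" where
  "succ_min L s = Inf {r. r > 0 \<and> (\<exists>S. S \<subseteq> L \<inter> cball 0 r \<and> independent S \<and> card S = s)}"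

end

theory Submission
  imports Defs
begin

text \<open>Choose linearly independent lattice vectors \<open>u\<^sub>1, \<dots>, u\<^sub>d\<close> with
  \<open>|u\<^sub>s| \<le> 2\<delta>\<^sub>s\<close>. For each \<open>s\<close>, among the lattice vectors of \<open>span {u\<^sub>1, \<dots>, u\<^sub>s}\<close>
  whose \<open>u\<^sub>s\<close>-coordinate is positive, take one with the least such coordinate and with the
  lower coordinates reduced into \<open>[0, 1)\<close>. By Euclidean division of coordinates these vectors
  \<open>w\<^sub>s\<close> form a basis of the lattice, and \<open>|w\<^sub>s| \<le> |u\<^sub>1| + \<dots> + |u\<^sub>s| \<le> 2d\<delta>\<^sub>s\<close>.
  The supports are then nested by the unimodular change \<open>v\<^sub>s\<^sub>+\<^sub>1 = w\<^sub>s\<^sub>+\<^sub>1 + c v\<^sub>s\<close>: each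
  coordinate in the support of \<open>v\<^sub>s\<close> vanishes in \<open>w\<^sub>s\<^sub>+\<^sub>1 + c v\<^sub>s\<close> for at most one \<open>c\<close>, so by
  pigeonhole some \<open>c \<in> {0, \<dots>, d}\<close> works, and each step costs a factor \<open>d + 1\<close>.\<close>

section \<open>Integer spans\<close>

definition int_span :: "(nat \<Rightarrow> real^'n) \<Rightarrow> (real^'n) set" where
  "int_span b = {(\<Sum>s=1..CARD('n). of_int (k s) *\<^sub>R b s) | k. True}"

lemma int_span_memI:
  fixes b :: "nat \<Rightarrow> real^'n"
  shows "x = (\<Sum>s=1..CARD('n). of_int (k s) *\<^sub>R b s) \<Longrightarrow> x \<in> int_span b"
  unfolding int_span_def by blast

lemma int_span_0: "0 \<in> int_span (b :: nat \<Rightarrow> real^'n)"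
  unfolding int_span_def by (auto intro!: exI[of _ "\<lambda>_. 0"])

lemma int_span_add:
  fixes b :: "nat \<Rightarrow> real^'n"
  assumes "x \<in> int_span b" "y \<in> int_span b"
  shows "x + y \<in> int_span b"
proof -
  obtain k l where "x = (\<Sum>s=1..CARD('n). of_int (k s) *\<^sub>R b s)"
    "y = (\<Sum>s=1..CARD('n). of_int (l s) *\<^sub>R b s)"
    using assms unfolding int_span_def by blast
  then show ?thesis
    by (intro int_span_memI[of _ "\<lambda>s. k s + l s"]) (simp add: sum.distrib scaleR_add_left)
qed

lemma int_span_scale:
  fixes b :: "nat \<Rightarrow> real^'n"
  assumes "x \<in> int_span b"
  shows "of_int m *\<^sub>R x \<in> int_span b"
proof -
  obtain k where "x = (\<Sum>s=1..CARD('n). of_int (k s) *\<^sub>R b s)"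
    using assms unfolding int_span_def by blast
  then show ?thesis
    by (intro int_span_memI[of _ "\<lambda>s. m * k s"]) (simp add: scaleR_sum_right)
qed

lemma int_span_diff:
  fixes b :: "nat \<Rightarrow> real^'n"
  shows "x \<in> int_span b \<Longrightarrow> y \<in> int_span b \<Longrightarrow> x - y \<in> int_span b"
  using int_span_add[of x b "of_int (-1) *\<^sub>R y"] int_span_scale[of y b "-1"] by simp

lemma int_span_sum:
  fixes b :: "nat \<Rightarrow> real^'n"
  shows "(\<And>i. i \<in> A \<Longrightarrow> f i \<in> int_span b) \<Longrightarrow> sum f A \<in> int_span b"
  by (induction A rule: infinite_finite_induct) (auto intro: int_span_0 int_span_add)

lemma int_span_generator:
  fixes b :: "nat \<Rightarrow> real^'n"
  assumes "s \<in> {1..CARD('n)}"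
  shows "b s \<in> int_span b"
proof (rule int_span_memI[of _ "\<lambda>t. if t = s then 1 else 0"])
  have "(\<Sum>t=1..CARD('n). of_int (if t = s then 1 else 0) *\<^sub>R b t) =
      (\<Sum>t=1..CARD('n). if t = s then b t else 0)"
    by (rule sum.cong) auto
  then show "b s = (\<Sum>t=1..CARD('n). of_int (if t = s then 1 else 0) *\<^sub>R b t)"
    using assms by simp
qed

lemma int_span_mono:
  fixes a b :: "nat \<Rightarrow> real^'n"
  assumes "\<And>s. s \<in> {1..CARD('n)} \<Longrightarrow> a s \<in> int_span b"
  shows "int_span a \<subseteq> int_span b"
proof
  fix x assume "x \<in> int_span a"
  then obtain k where "x = (\<Sum>s=1..CARD('n). of_int (k s) *\<^sub>R a s)"
    unfolding int_span_def by blast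
  then show "x \<in> int_span b"
    using assms by (auto intro!: int_span_sum int_span_scale)
qed

lemma int_span_subset_span:
  fixes b :: "nat \<Rightarrow> real^'n"
  shows "int_span b \<subseteq> span (b ` {1..CARD('n)})"
  unfolding int_span_def by (auto intro!: span_sum span_scale span_base[OF imageI])

section \<open>Coordinates with respect to a frame\<close>

locale frame =
  fixes b :: "nat \<Rightarrow> real^'n"
  assumes inj: "inj_on b {1..CARD('n)}" and independent: "independent (b ` {1..CARD('n)})"
begin

lemma span_eq_UNIV: "span (b ` {1..CARD('n)}) = UNIV"
proof -
  have "card (b ` {1..CARD('n)}) = CARD('n)"
    using inj by (simp add: card_image)
  then show ?thesis
    using card_ge_dim_independent[OF _ independent, of UNIV] by auto
qed

definition coord :: "real^'n \<Rightarrow> nat \<Rightarrow> real" where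
  "coord x s = representation (b ` {1..CARD('n)}) x (b s)"

lemma sum_coord: "(\<Sum>s=1..CARD('n). coord x s *\<^sub>R b s) = x"
proof -
  have "(\<Sum>s=1..CARD('n). coord x s *\<^sub>R b s) =
      (\<Sum>v\<in>b ` {1..CARD('n)}. representation (b ` {1..CARD('n)}) x v *\<^sub>R v)"
    using inj by (simp add: sum.reindex coord_def)
  also have "\<dots> = x"
    using independent span_eq_UNIV by (simp add: sum_representation_eq)
  finally show ?thesis .
qed

lemma coord_combination:
  assumes "s \<in> {1..CARD('n)}"
  shows "coord (\<Sum>t=1..CARD('n). k t *\<^sub>R b t) s = k s"
proof -
  have "coord (\<Sum>t=1..CARD('n). k t *\<^sub>R b t) s =
      (\<Sum>t=1..CARD('n). k t * (if b s = b t then 1 else 0))"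
    using independent span_eq_UNIV
    by (simp add: coord_def representation_sum representation_scale representation_basis)
  also have "\<dots> = (\<Sum>t=1..CARD('n). if t = s then k t else 0)"
    using assms inj by (intro sum.cong) (auto simp: inj_on_eq_iff)
  also have "\<dots> = k s"
    using assms by simp
  finally show ?thesis .
qed

lemma coord_generator:
  assumes "s \<in> {1..CARD('n)}" "t \<in> {1..CARD('n)}"
  shows "coord (b s) t = (if t = s then 1 else 0)"
  using assms inj independent
  by (simp add: coord_def representation_basis inj_on_eq_iff)

lemma coord_add: "coord (x + y) s = coord x s + coord y s"
  using independent span_eq_UNIV by (simp add: coord_def representation_add)

lemma coord_scale: "coord (r *\<^sub>R x) s = r * coord x s"
  using independent span_eq_UNIV by (simp add: coord_def representation_scale)

lemma coord_diff: "coord (x - y) s = coord x s - coord y s"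
  using independent span_eq_UNIV by (simp add: coord_def representation_diff)

lemma linear_coord: "linear (\<lambda>x. coord x s)"
  by (rule linearI) (simp_all add: coord_add coord_scale)

lemma coord_bounded: "\<exists>B>0. \<forall>x. \<forall>s\<in>{1..CARD('n)}. \<bar>coord x s\<bar> \<le> B * norm x"
proof -
  have "\<forall>\<^sub>F B in at_top. B > 0 \<and> (\<forall>x. \<bar>coord x s\<bar> \<le> B * norm x)" for s
  proof -
    obtain B where B: "B > 0" "\<And>x. \<bar>coord x s\<bar> \<le> B * norm x"
      using linear_bounded_pos[OF linear_coord] by (metis real_norm_def)
    have "B' > 0 \<and> (\<forall>x. \<bar>coord x s\<bar> \<le> B' * norm x)" if "B \<le> B'" for B'
    proof (intro conjI allI)
      show "B' > 0" using B(1) that by linarith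
      show "\<bar>coord x s\<bar> \<le> B' * norm x" for x
        using B(2)[of x] mult_right_mono[OF that norm_ge_zero, of x] by linarith
    qed
    then show ?thesis
      unfolding eventually_at_top_linorder by blast
  qed
  then have "\<forall>\<^sub>F B in at_top. \<forall>s\<in>{1..CARD('n)}. B > 0 \<and> (\<forall>x. \<bar>coord x s\<bar> \<le> B * norm x)"
    by (simp add: eventually_ball_finite)
  then obtain B where "\<forall>B'\<ge>B. \<forall>s\<in>{1..CARD('n)}. B' > 0 \<and> (\<forall>x. \<bar>coord x s\<bar> \<le> B' * norm x)"
    unfolding eventually_at_top_linorder by blast
  moreover have "1 \<in> {1..CARD('n)}" by simp
  ultimately have "B > 0" "\<forall>x. \<forall>s\<in>{1..CARD('n)}. \<bar>coord x s\<bar> \<le> B * norm x"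
    by blast+
  then show ?thesis by blast
qed

lemma norm_le_sum_coord: "norm x \<le> (\<Sum>t=1..CARD('n). \<bar>coord x t\<bar> * norm (b t))"
proof -
  have "norm x = norm (\<Sum>t=1..CARD('n). coord x t *\<^sub>R b t)"
    by (simp only: sum_coord)
  also have "\<dots> \<le> (\<Sum>t=1..CARD('n). \<bar>coord x t\<bar> * norm (b t))"
    by (rule order_trans[OF norm_sum]) simp
  finally show ?thesis .
qed

end

lemma lattice_basis_iff_frame: "lattice_basis L b \<longleftrightarrow> frame b \<and> L = int_span b"
  unfolding lattice_basis_def frame_def int_span_def by simp

section \<open>Successive minima\<close>

lemma independent_transversal:
  fixes S :: "nat \<Rightarrow> 'a::euclidean_space set"
  assumes "\<And>k. k \<in> {1..n} \<Longrightarrow> independent (S k) \<and> card (S k) = k"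
  shows "\<exists>u. inj_on u {1..n} \<and> independent (u ` {1..n}) \<and> (\<forall>k\<in>{1..n}. u k \<in> S k)"
  using assms
proof (induction n)
  case 0
  then show ?case by (simp add: independent_empty)
next
  case (Suc n)
  have "independent (S k) \<and> card (S k) = k" if "k \<in> {1..n}" for k
    using Suc.prems that by simp
  then obtain u where u: "inj_on u {1..n}" "independent (u ` {1..n})" "\<forall>k\<in>{1..n}. u k \<in> S k"
    using Suc.IH by blast
  have S: "independent (S (Suc n))" "card (S (Suc n)) = Suc n"
    using Suc.prems by auto
  have "\<not> S (Suc n) \<subseteq> span (u ` {1..n})"
  proof
    assume "S (Suc n) \<subseteq> span (u ` {1..n})"
    then have "Suc n \<le> dim (span (u ` {1..n}))"
      using independent_card_le_dim[of "S (Suc n)" "span (u ` {1..n})"] S by simp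
    also have "\<dots> \<le> card (u ` {1..n})"
      using dim_le_card'[of "u ` {1..n}"] by (simp add: dim_span)
    also have "\<dots> \<le> n"
      using card_image_le[of "{1..n}" u] by simp
    finally show False by simp
  qed
  then obtain x where x: "x \<in> S (Suc n)" "x \<notin> span (u ` {1..n})"
    by blast
  have x_new: "x \<notin> u ` {1..n}"
    using x(2) span_base[of x "u ` {1..n}"] by blast
  define u' where "u' = u(Suc n := x)"
  have upd: "u' ` {1..n} = u ` {1..n}" "inj_on u' {1..n}"
    using u(1) unfolding u'_def by (auto intro: inj_on_cong[THEN iffD1])
  have ins: "{1..Suc n} = insert (Suc n) {1..n}"
    by auto
  have x_at: "u' (Suc n) = x"
    by (simp add: u'_def)
  have "inj_on u' {1..Suc n}"
    unfolding ins inj_on_insert x_at using upd x_new by (metis Diff_subset image_mono subsetD)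
  moreover have "independent (u' ` {1..Suc n})"
    unfolding ins image_insert x_at upd(1) using u(2) x(2) x_new by (simp add: independent_insert)
  moreover have "\<forall>k\<in>{1..Suc n}. u' k \<in> S k"
    using u(3) x(1) by (auto simp: u'_def)
  ultimately show ?case
    by blast
qed

definition indep_radii :: "(real^'n) set \<Rightarrow> nat \<Rightarrow> real set" where
  "indep_radii L s = {r. r > 0 \<and> (\<exists>S. S \<subseteq> L \<inter> cball 0 r \<and> independent S \<and> card S = s)}"

lemma succ_min_eq_Inf: "succ_min L s = Inf (indep_radii L s)"
  unfolding succ_min_def indep_radii_def ..

lemma bdd_below_indep_radii: "bdd_below (indep_radii L s)"
  unfolding indep_radii_def by (auto intro: bdd_belowI[of _ 0])

locale based_lattice = frame b for b :: "nat \<Rightarrow> real^'n" +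
  fixes L :: "(real^'n) set"
  assumes lattice_eq: "L = int_span b"
begin

lemma coord_in_Ints:
  assumes "x \<in> L" "s \<in> {1..CARD('n)}"
  shows "coord x s \<in> \<int>"
proof -
  obtain k where "x = (\<Sum>t=1..CARD('n). of_int (k t) *\<^sub>R b t)"
    using assms(1) lattice_eq unfolding int_span_def by blast
  then show ?thesis
    using coord_combination[OF assms(2)] by simp
qed

lemma finite_lattice_cball: "finite (L \<inter> cball 0 R)"
proof -
  obtain B where "B > 0" and B: "\<And>x s. s \<in> {1..CARD('n)} \<Longrightarrow> \<bar>coord x s\<bar> \<le> B * norm x"
    using coord_bounded by blast
  define N where "N = \<lceil>B * R\<rceil>"
  define coords where "coords x s = (if s \<in> {1..CARD('n)} then coord x s else 0)" for x s
  define F where "F = {f. \<forall>s. (s \<in> {1..CARD('n)} \<longrightarrow> f s \<in> of_int ` {-N..N}) \<and>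
      (s \<notin> {1..CARD('n)} \<longrightarrow> f s = (0::real))}"
  have "inj_on coords (L \<inter> cball 0 R)"
  proof (rule inj_onI)
    fix x y assume "coords x = coords y"
    then have "\<And>s. s \<in> {1..CARD('n)} \<Longrightarrow> coord x s = coord y s"
      unfolding coords_def by metis
    then show "x = y"
      using sum_coord[of x] sum_coord[of y] by (metis (no_types, lifting) sum.cong)
  qed
  moreover have "coords ` (L \<inter> cball 0 R) \<subseteq> F"
  proof (intro image_subsetI)
    fix x assume x: "x \<in> L \<inter> cball 0 R"
    have "coords x s \<in> of_int ` {-N..N}" if s: "s \<in> {1..CARD('n)}" for s
    proof -
      obtain m where m: "coord x s = of_int m"
        using coord_in_Ints[OF _ s] x by (auto elim: Ints_cases)
      have "B * norm x \<le> B * R"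
        using x \<open>B > 0\<close> by (intro mult_left_mono) auto
      then have "\<bar>of_int m\<bar> \<le> B * R"
        using B[OF s, of x] m by linarith
      then have "m \<in> {-N..N}"
        unfolding N_def by (simp add: abs_le_iff) linarith
      then show ?thesis
        using s m unfolding coords_def by simp
    qed
    then show "coords x \<in> F"
      unfolding F_def coords_def by auto
  qed
  moreover have "finite F"
    unfolding F_def by (intro finite_set_of_finite_funs) auto
  ultimately show ?thesis
    by (rule inj_on_finite)
qed

lemma lattice_norm_lower_bound: "\<exists>m>0. \<forall>x\<in>L. x \<noteq> 0 \<longrightarrow> m \<le> norm x"
proof -
  obtain B where "B > 0" and B: "\<And>x s. s \<in> {1..CARD('n)} \<Longrightarrow> \<bar>coord x s\<bar> \<le> B * norm x"
    using coord_bounded by blast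
  have "1 / B \<le> norm x" if "x \<in> L" "x \<noteq> 0" for x
  proof -
    obtain s where s: "s \<in> {1..CARD('n)}" "coord x s \<noteq> 0"
      using sum_coord[of x] \<open>x \<noteq> 0\<close> by (metis (no_types, lifting) scale_zero_left sum.neutral)
    have "1 \<le> \<bar>coord x s\<bar>"
      using coord_in_Ints[OF that(1) s(1)] s(2) by (rule Ints_nonzero_abs_ge1)
    also have "\<dots> \<le> B * norm x"
      using B[OF s(1)] .
    finally show ?thesis
      using \<open>B > 0\<close> by (simp add: field_simps)
  qed
  then show ?thesis
    using \<open>B > 0\<close> by (intro exI[of _ "1 / B"]) auto
qed

lemma lattice_diff: "x \<in> L \<Longrightarrow> y \<in> L \<Longrightarrow> x - y \<in> L"
  using int_span_diff lattice_eq by blast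

lemma lattice_scale: "x \<in> L \<Longrightarrow> of_int m *\<^sub>R x \<in> L"
  using int_span_scale lattice_eq by blast

lemma lattice_int_combination:
  "(\<And>t. t \<in> A \<Longrightarrow> u t \<in> L) \<Longrightarrow> (\<Sum>t\<in>A. of_int (k t) *\<^sub>R u t) \<in> L"
  unfolding lattice_eq by (intro int_span_sum int_span_scale)

lemma indep_radii_nonempty:
  assumes "s \<le> CARD('n)"
  shows "indep_radii L s \<noteq> {}"
proof -
  define r where "r = 1 + (\<Sum>t=1..CARD('n). norm (b t))"
  have "card (b ` {1..CARD('n)}) = CARD('n)"
    using inj by (simp add: card_image)
  then obtain S where S: "S \<subseteq> b ` {1..CARD('n)}" "card S = s"
    using obtain_subset_with_card_n[of s "b ` {1..CARD('n)}"] assms by metis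
  have "S \<subseteq> L \<inter> cball 0 r"
  proof
    fix x assume "x \<in> S"
    then obtain t where t: "t \<in> {1..CARD('n)}" "x = b t"
      using S(1) by auto
    have "norm (b t) \<le> (\<Sum>t=1..CARD('n). norm (b t))"
      using t(1) by (intro member_le_sum) auto
    then show "x \<in> L \<inter> cball 0 r"
      using t int_span_generator[OF t(1), of b] lattice_eq unfolding r_def by auto
  qed
  moreover have "r > 0"
    unfolding r_def by (simp add: add_pos_nonneg sum_nonneg)
  ultimately have "r \<in> indep_radii L s"
    using S independent_mono[OF independent S(1)] unfolding indep_radii_def by blast
  then show ?thesis by blast
qed

lemma succ_min_pos:
  assumes "1 \<le> s" "s \<le> CARD('n)"
  shows "0 < succ_min L s"
proof -
  obtain m where "m > 0" and m: "\<And>x. x \<in> L \<Longrightarrow> x \<noteq> 0 \<Longrightarrow> m \<le> norm x"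
    using lattice_norm_lower_bound by blast
  have "m \<le> r" if r: "r \<in> indep_radii L s" for r
  proof -
    obtain S where S: "S \<subseteq> L \<inter> cball 0 r" "independent S" "card S = s"
      using r unfolding indep_radii_def by blast
    moreover have "S \<noteq> {}"
      using S(3) assms(1) by auto
    ultimately obtain x where x: "x \<in> S"
      by blast
    then have "x \<noteq> 0"
      using S(2) dependent_zero by blast
    then have "m \<le> norm x"
      using x S(1) by (intro m) auto
    also have "\<dots> \<le> r"
      using x S(1) by auto
    finally show "m \<le> r" .
  qed
  then have "m \<le> succ_min L s"
    unfolding succ_min_eq_Inf by (rule cInf_greatest[OF indep_radii_nonempty[OF assms(2)]])
  then show ?thesis
    using \<open>m > 0\<close> by linarith
qed

lemma succ_min_mono:
  assumes "s \<le> s'" "s' \<le> CARD('n)"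
  shows "succ_min L s \<le> succ_min L s'"
proof -
  have "indep_radii L s' \<subseteq> indep_radii L s"
  proof
    fix r assume "r \<in> indep_radii L s'"
    then obtain S where S: "r > 0" "S \<subseteq> L \<inter> cball 0 r" "independent S" "card S = s'"
      unfolding indep_radii_def by blast
    obtain T where "T \<subseteq> S" "card T = s"
      using obtain_subset_with_card_n[of s S] S(4) assms(1) by metis
    then show "r \<in> indep_radii L s"
      using S independent_mono[OF S(3)] unfolding indep_radii_def by blast
  qed
  then show ?thesis
    unfolding succ_min_eq_Inf
    by (intro cInf_superset_mono indep_radii_nonempty assms(2) bdd_below_indep_radii)
qed

lemma independent_near_succ_min:
  assumes "1 \<le> s" "s \<le> CARD('n)"
  obtains S where "S \<subseteq> L \<inter> cball 0 (2 * succ_min L s)" "independent S" "card S = s"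
proof -
  have "Inf (indep_radii L s) < 2 * succ_min L s"
    using succ_min_pos[OF assms] by (simp add: succ_min_eq_Inf)
  then obtain r where r: "r \<in> indep_radii L s" "r < 2 * succ_min L s"
    using cInf_lessD[OF indep_radii_nonempty[OF assms(2)]] by blast
  then obtain S where "S \<subseteq> L \<inter> cball 0 r" "independent S" "card S = s"
    unfolding indep_radii_def by blast
  moreover have "cball 0 r \<subseteq> cball (0 :: real^'n) (2 * succ_min L s)"
    using r(2) by auto
  ultimately show ?thesis
    using that by blast
qed

lemma frame_near_succ_min:
  obtains u where "frame u" "\<And>s. s \<in> {1..CARD('n)} \<Longrightarrow> u s \<in> L"
    "\<And>s. s \<in> {1..CARD('n)} \<Longrightarrow> norm (u s) \<le> 2 * succ_min L s"
proof -
  have "\<exists>S. S \<subseteq> L \<inter> cball 0 (2 * succ_min L s) \<and> independent S \<and> card S = s"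
    if "s \<in> {1..CARD('n)}" for s
  proof -
    from that have "1 \<le> s" "s \<le> CARD('n)" by auto
    then obtain S where "S \<subseteq> L \<inter> cball 0 (2 * succ_min L s)" "independent S" "card S = s"
      by (rule independent_near_succ_min)
    then show ?thesis by blast
  qed
  then obtain S where S: "\<And>s. s \<in> {1..CARD('n)} \<Longrightarrow>
      S s \<subseteq> L \<inter> cball 0 (2 * succ_min L s) \<and> independent (S s) \<and> card (S s) = s"
    by metis
  then obtain u where "inj_on u {1..CARD('n)}" "independent (u ` {1..CARD('n)})"
    and u: "\<And>s. s \<in> {1..CARD('n)} \<Longrightarrow> u s \<in> S s"
    using independent_transversal[of "CARD('n)" S] by blast
  then have "frame u"
    by (simp add: frame_def)
  moreover have "u s \<in> L" "norm (u s) \<le> 2 * succ_min L s" if "s \<in> {1..CARD('n)}" for s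
    using S[OF that] u[OF that] by auto
  ultimately show ?thesis
    using that by blast
qed

end

section \<open>A short basis from short independent vectors\<close>

locale lattice_frame = based_lattice b L + u: frame u
  for b u :: "nat \<Rightarrow> real^'n" and L +
  assumes frame_in_lattice: "\<And>s. s \<in> {1..CARD('n)} \<Longrightarrow> u s \<in> L"
begin

definition flag :: "nat \<Rightarrow> (real^'n) set" where
  "flag s = {x \<in> L. \<forall>t\<in>{1..CARD('n)}. s < t \<longrightarrow> u.coord x t = 0}"

definition reduced :: "nat \<Rightarrow> (real^'n) set" where
  "reduced s = {x \<in> flag s. 0 < u.coord x s \<and> u.coord x s \<le> 1 \<and>
     (\<forall>t\<in>{1..CARD('n)}. t < s \<longrightarrow> 0 \<le> u.coord x t \<and> u.coord x t < 1)}"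

definition pivot :: "nat \<Rightarrow> real^'n" where
  "pivot s = arg_min_on (\<lambda>x. u.coord x s) (reduced s)"

lemma abs_coord_reduced_le:
  assumes "x \<in> reduced s" "t \<in> {1..CARD('n)}"
  shows "\<bar>u.coord x t\<bar> \<le> (if t \<le> s then 1 else 0)"
  using assms unfolding reduced_def flag_def
  by (cases t s rule: linorder_cases) auto

lemma finite_reduced: "finite (reduced s)"
proof -
  have "reduced s \<subseteq> L \<inter> cball 0 (\<Sum>t=1..CARD('n). norm (u t))"
  proof
    fix x assume x: "x \<in> reduced s"
    have "norm x \<le> (\<Sum>t=1..CARD('n). \<bar>u.coord x t\<bar> * norm (u t))"
      by (rule u.norm_le_sum_coord)
    also have "\<dots> \<le> (\<Sum>t=1..CARD('n). norm (u t))"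
    proof (intro sum_mono mult_left_le_one_le)
      fix t assume "t \<in> {1..CARD('n)}"
      then show "\<bar>u.coord x t\<bar> \<le> 1"
        using abs_coord_reduced_le[OF x, of t] by (simp split: if_split_asm)
    qed auto
    finally show "x \<in> L \<inter> cball 0 (\<Sum>t=1..CARD('n). norm (u t))"
      using x unfolding reduced_def flag_def by auto
  qed
  then show ?thesis
    using finite_lattice_cball finite_subset by blast
qed

lemma generator_in_reduced: "s \<in> {1..CARD('n)} \<Longrightarrow> u s \<in> reduced s"
  using frame_in_lattice by (auto simp: reduced_def flag_def u.coord_generator)

lemma pivot_in_reduced: "s \<in> {1..CARD('n)} \<Longrightarrow> pivot s \<in> reduced s"
  unfolding pivot_def using finite_reduced generator_in_reduced
  by (intro arg_min_if_finite(1)) blast+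

lemma pivot_le_reduced: "s \<in> {1..CARD('n)} \<Longrightarrow> x \<in> reduced s \<Longrightarrow> u.coord (pivot s) s \<le> u.coord x s"
  unfolding pivot_def using finite_reduced by (intro arg_min_least) blast+

lemma reduce_lower_coords:
  assumes "x \<in> flag s" "s \<in> {1..CARD('n)}"
  obtains y where "y \<in> flag s" "u.coord y s = u.coord x s"
    "\<And>t. t \<in> {1..CARD('n)} \<Longrightarrow> t < s \<Longrightarrow> 0 \<le> u.coord y t \<and> u.coord y t < 1"
proof -
  define k where "k t = (if t < s then \<lfloor>u.coord x t\<rfloor> else 0)" for t
  define y where "y = x - (\<Sum>t=1..CARD('n). of_int (k t) *\<^sub>R u t)"
  have coord_y: "u.coord y t = u.coord x t - of_int (k t)" if "t \<in> {1..CARD('n)}" for t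
    unfolding y_def u.coord_diff using u.coord_combination[OF that] by simp
  have "y \<in> L"
    unfolding y_def using assms frame_in_lattice
    by (intro lattice_diff lattice_int_combination) (auto simp: flag_def)
  then have "y \<in> flag s"
    using assms by (auto simp: flag_def coord_y k_def)
  moreover have "u.coord y s = u.coord x s"
    using assms(2) by (simp add: coord_y k_def)
  moreover have "0 \<le> u.coord y t \<and> u.coord y t < 1" if "t \<in> {1..CARD('n)}" "t < s" for t
    using coord_y[OF that(1)] that(2) floor_correct[of "u.coord x t"] by (simp add: k_def) linarith
  ultimately show ?thesis
    using that by blast
qed

lemma flag_diff_scale:
  assumes "x \<in> flag s" "y \<in> flag s"
  shows "x - of_int q *\<^sub>R y \<in> flag s"
  using assms lattice_diff lattice_scale by (auto simp: flag_def u.coord_diff u.coord_scale)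

lemma pivot_minimal:
  assumes s: "s \<in> {1..CARD('n)}" and x: "x \<in> flag s" "0 < u.coord x s"
  shows "u.coord (pivot s) s \<le> u.coord x s"
proof (cases "u.coord x s \<le> 1")
  case True
  obtain y where y: "y \<in> flag s" "u.coord y s = u.coord x s"
    "\<And>t. t \<in> {1..CARD('n)} \<Longrightarrow> t < s \<Longrightarrow> 0 \<le> u.coord y t \<and> u.coord y t < 1"
    using reduce_lower_coords[OF x(1) s] by blast
  then have "y \<in> reduced s"
    using True x(2) unfolding reduced_def by auto
  then show ?thesis
    using pivot_le_reduced[OF s] y(2) by fastforce
next
  case False
  then show ?thesis
    using pivot_in_reduced[OF s] unfolding reduced_def by auto
qed

text \<open>Division with remainder of the \<open>s\<close>-th coordinate by that of the pivot; the remainder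
  vanishes by minimality of the pivot.\<close>

lemma flag_Suc_reduce:
  assumes s: "Suc s \<in> {1..CARD('n)}" and x: "x \<in> flag (Suc s)"
  obtains q where "x - of_int q *\<^sub>R pivot (Suc s) \<in> flag s"
proof -
  define p where "p = pivot (Suc s)"
  have p: "p \<in> flag (Suc s)" "0 < u.coord p (Suc s)"
    using pivot_in_reduced[OF s] unfolding p_def reduced_def by auto
  define q where "q = \<lfloor>u.coord x (Suc s) / u.coord p (Suc s)\<rfloor>"
  define x' where "x' = x - of_int q *\<^sub>R p"
  have x': "x' \<in> flag (Suc s)"
    unfolding x'_def using x p(1) by (rule flag_diff_scale)
  have coord_x': "u.coord x' (Suc s) = u.coord x (Suc s) - of_int q * u.coord p (Suc s)"
    unfolding x'_def by (simp add: u.coord_diff u.coord_scale)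
  have "0 \<le> u.coord x' (Suc s)" "u.coord x' (Suc s) < u.coord p (Suc s)"
    using floor_divide_lower[OF p(2)] floor_divide_upper[OF p(2)] unfolding coord_x' q_def
    by (simp_all add: algebra_simps)
  then have "u.coord x' (Suc s) = 0"
    using pivot_minimal[OF s x'] unfolding p_def by fastforce
  then have "u.coord x' t = 0" if "t \<in> {1..CARD('n)}" "s < t" for t
    using x' that unfolding flag_def by (cases "t = Suc s") auto
  then have "x' \<in> flag s"
    using x' unfolding flag_def by auto
  then show ?thesis
    using that unfolding x'_def p_def by blast
qed

lemma flag_subset_int_span_pivot: "s \<le> CARD('n) \<Longrightarrow> flag s \<subseteq> int_span pivot"
proof (induction s)
  case 0
  have "x = 0" if "x \<in> flag 0" for x
    using that u.sum_coord[of x] by (auto simp: flag_def)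
  then show ?case
    using int_span_0 by blast
next
  case (Suc s)
  have s: "Suc s \<in> {1..CARD('n)}"
    using Suc.prems by simp
  show ?case
  proof
    fix x assume "x \<in> flag (Suc s)"
    then obtain q where "x - of_int q *\<^sub>R pivot (Suc s) \<in> flag s"
      using flag_Suc_reduce[OF s] by blast
    then have "x - of_int q *\<^sub>R pivot (Suc s) + of_int q *\<^sub>R pivot (Suc s) \<in> int_span pivot"
      using Suc s by (intro int_span_add int_span_scale int_span_generator) auto
    then show "x \<in> int_span pivot"
      by simp
  qed
qed

lemma lattice_eq_int_span_pivot: "L = int_span pivot"
proof
  have "L = flag (CARD('n))"
    unfolding flag_def by auto
  then show "L \<subseteq> int_span pivot"
    using flag_subset_int_span_pivot by blast
  have "pivot s \<in> int_span b" if "s \<in> {1..CARD('n)}" for s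
    using pivot_in_reduced[OF that] lattice_eq unfolding reduced_def flag_def by auto
  then show "int_span pivot \<subseteq> L"
    unfolding lattice_eq by (rule int_span_mono)
qed

lemma norm_pivot_le:
  assumes "s \<in> {1..CARD('n)}"
  shows "norm (pivot s) \<le> (\<Sum>t=1..s. norm (u t))"
proof -
  have "norm (pivot s) \<le> (\<Sum>t=1..CARD('n). \<bar>u.coord (pivot s) t\<bar> * norm (u t))"
    by (rule u.norm_le_sum_coord)
  also have "\<dots> \<le> (\<Sum>t=1..CARD('n). if t \<le> s then norm (u t) else 0)"
  proof (intro sum_mono)
    fix t assume "t \<in> {1..CARD('n)}"
    from abs_coord_reduced_le[OF pivot_in_reduced[OF assms] this]
    show "\<bar>u.coord (pivot s) t\<bar> * norm (u t) \<le> (if t \<le> s then norm (u t) else 0)"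
      by (cases "t \<le> s") (auto intro: mult_left_le_one_le)
  qed
  also have "\<dots> = (\<Sum>t=1..s. norm (u t))"
    using assms by (simp add: sum.inter_filter[symmetric]) (intro sum.cong; auto)
  finally show ?thesis .
qed

end

context based_lattice
begin

lemma short_generators:
  obtains w where "L = int_span w"
    "\<And>s. s \<in> {1..CARD('n)} \<Longrightarrow> norm (w s) \<le> 2 * real CARD('n) * succ_min L s"
proof -
  obtain u where "frame u" and u_in: "\<And>s. s \<in> {1..CARD('n)} \<Longrightarrow> u s \<in> L"
    and u_short: "\<And>s. s \<in> {1..CARD('n)} \<Longrightarrow> norm (u s) \<le> 2 * succ_min L s"
    using frame_near_succ_min by blast
  interpret lattice_frame b u L
    using \<open>frame u\<close> u_in by unfold_locales (simp_all add: frame_def)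
  have "norm (pivot s) \<le> 2 * real CARD('n) * succ_min L s" if s: "s \<in> {1..CARD('n)}" for s
  proof -
    have "norm (pivot s) \<le> (\<Sum>t=1..s. norm (u t))"
      using norm_pivot_le[OF s] .
    also have "\<dots> \<le> (\<Sum>t=1..s. 2 * succ_min L s)"
    proof (intro sum_mono)
      fix t assume "t \<in> {1..s}"
      then show "norm (u t) \<le> 2 * succ_min L s"
        using s u_short[of t] succ_min_mono[of t s] by auto
    qed
    also have "\<dots> \<le> 2 * real CARD('n) * succ_min L s"
      using s succ_min_pos[of s] by (simp add: mult_right_mono)
    finally show ?thesis .
  qed
  then show ?thesis
    using that lattice_eq_int_span_pivot by blast
qed

lemma lattice_basis_of_int_span:
  assumes "L = int_span a"
  shows "lattice_basis L a"
proof -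
  have "b ` {1..CARD('n)} \<subseteq> span (a ` {1..CARD('n)})"
    using int_span_generator[of _ b] int_span_subset_span[of a] lattice_eq assms by blast
  then have "span (b ` {1..CARD('n)}) \<subseteq> span (a ` {1..CARD('n)})"
    by (simp add: span_minimal)
  then have span_a: "span (a ` {1..CARD('n)}) = UNIV"
    using span_eq_UNIV by auto
  have card_a: "card (a ` {1..CARD('n)}) \<le> CARD('n)"
    using card_image_le[of "{1..CARD('n)}" a] by simp
  have "independent (a ` {1..CARD('n)})"
    using span_a card_a by (intro card_le_dim_spanning[of _ UNIV]) auto
  moreover have "CARD('n) \<le> card (a ` {1..CARD('n)})"
    using span_a span_card_ge_dim[of "a ` {1..CARD('n)}" UNIV] by simp
  then have "inj_on a {1..CARD('n)}"
    using card_a by (intro eq_card_imp_inj_on) simp_all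
  ultimately show ?thesis
    using assms by (simp add: lattice_basis_iff_frame frame_def)
qed

end

section \<open>Nesting the supports\<close>

lemma supp_subset_shift_exists:
  fixes v w :: "real^'n"
  shows "\<exists>c\<le>CARD('n). supp_vec v \<subseteq> supp_vec (w + of_nat c *\<^sub>R v)"
proof (rule ccontr)
  assume "\<not> ?thesis"
  then have "\<forall>c\<in>{0..CARD('n)}. \<exists>h. v $ h \<noteq> 0 \<and> w $ h + of_nat c * v $ h = 0"
    by (auto simp: supp_vec_def)
  then obtain h where h: "\<And>c. c \<in> {0..CARD('n)} \<Longrightarrow> v $ h c \<noteq> 0 \<and> w $ h c + of_nat c * v $ h c = 0"
    by metis
  have "inj_on h {0..CARD('n)}"
  proof (rule inj_onI)
    fix c c' assume c: "c \<in> {0..CARD('n)}" "c' \<in> {0..CARD('n)}" and eq: "h c = h c'"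
    have "of_nat c * v $ h c = of_nat c' * v $ h c"
      using h[OF c(1)] h[OF c(2)] unfolding eq by linarith
    then show "c = c'"
      using h[OF c(1)] by simp
  qed
  then have "card {0..CARD('n)} \<le> CARD('n)"
    using card_inj_on_le[of h "{0..CARD('n)}" UNIV] by simp
  then show False
    by simp
qed

definition supp_shift :: "real^'n \<Rightarrow> real^'n \<Rightarrow> nat" where
  "supp_shift v w = (LEAST c. supp_vec v \<subseteq> supp_vec (w + of_nat c *\<^sub>R v))"

lemma supp_shift_le:
  fixes v w :: "real^'n"
  shows "supp_shift v w \<le> CARD('n)"
proof -
  obtain c where "c \<le> CARD('n)" "supp_vec v \<subseteq> supp_vec (w + of_nat c *\<^sub>R v)"
    using supp_subset_shift_exists by blast
  then show ?thesis
    unfolding supp_shift_def by (intro order_trans[OF Least_le])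
qed

lemma supp_subset_supp_shift:
  fixes v w :: "real^'n"
  shows "supp_vec v \<subseteq> supp_vec (w + of_nat (supp_shift v w) *\<^sub>R v)"
  unfolding supp_shift_def by (rule LeastI_ex) (use supp_subset_shift_exists[of v w] in blast)

text \<open>The value at the dummy index \<open>0\<close> makes \<open>nest_supp w 1 = w 1\<close>.\<close>

primrec nest_supp :: "(nat \<Rightarrow> real^'n) \<Rightarrow> nat \<Rightarrow> real^'n" where
  "nest_supp w 0 = 0"
| "nest_supp w (Suc s) = w (Suc s) + of_nat (supp_shift (nest_supp w s) (w (Suc s))) *\<^sub>R nest_supp w s"

lemma supp_nest_supp_mono: "supp_vec (nest_supp w s) \<subseteq> supp_vec (nest_supp w (Suc s))"
  by (simp add: supp_subset_supp_shift)

lemma int_span_nest_supp: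
  fixes w :: "nat \<Rightarrow> real^'n"
  shows "int_span (nest_supp w) = int_span w"
proof
  have "nest_supp w s \<in> int_span w" if "s \<le> CARD('n)" for s
    using that
  proof (induction s)
    case (Suc s)
    then show ?case
      using int_span_scale[of "nest_supp w s" w "int _"]
      by (auto intro!: int_span_add int_span_generator)
  qed (simp add: int_span_0)
  then show "int_span (nest_supp w) \<subseteq> int_span w"
    by (intro int_span_mono) simp
next
  have "w s \<in> int_span (nest_supp w)" if s: "s \<in> {1..CARD('n)}" for s
  proof -
    obtain r where r: "s = Suc r"
      using s by (cases s) auto
    have "nest_supp w r \<in> int_span (nest_supp w)"
    proof (cases "r = 0")
      case True
      then show ?thesis by (simp add: int_span_0)
    next
      case False
      then show ?thesis using s r by (intro int_span_generator) auto
    qed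
    then have "nest_supp w s - of_int (int (supp_shift (nest_supp w r) (w s))) *\<^sub>R nest_supp w r \<in> int_span (nest_supp w)"
      by (rule int_span_diff[OF int_span_generator[OF s] int_span_scale])
    then show ?thesis
      by (simp add: r)
  qed
  then show "int_span w \<subseteq> int_span (nest_supp w)"
    by (rule int_span_mono)
qed

lemma norm_nest_supp_le:
  fixes w :: "nat \<Rightarrow> real^'n" and \<delta> :: "nat \<Rightarrow> real"
  assumes "K \<ge> 0"
    and w: "\<And>s. s \<in> {1..CARD('n)} \<Longrightarrow> norm (w s) \<le> K * \<delta> s"
    and \<delta>_nonneg: "\<And>s. s \<in> {1..CARD('n)} \<Longrightarrow> 0 \<le> \<delta> s"
    and \<delta>_mono: "\<And>s. s \<in> {1..<CARD('n)} \<Longrightarrow> \<delta> s \<le> \<delta> (Suc s)"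
  shows "s \<in> {1..CARD('n)} \<Longrightarrow> norm (nest_supp w s) \<le> K * (real CARD('n) + 1) ^ s * \<delta> s"
proof (induction s)
  case (Suc s)
  define D where "D = real CARD('n) + 1"
  define c where "c = supp_shift (nest_supp w s) (w (Suc s))"
  have D: "1 \<le> D" "1 \<le> D ^ s" and c: "real c \<le> D - 1"
    using supp_shift_le[of "nest_supp w s" "w (Suc s)"] by (simp_all add: D_def c_def)
  have \<delta>: "0 \<le> \<delta> (Suc s)"
    using Suc.prems by (rule \<delta>_nonneg)
  have "norm (nest_supp w (Suc s)) \<le> norm (w (Suc s)) + real c * norm (nest_supp w s)"
    by (simp add: c_def norm_triangle_le)
  also have "\<dots> \<le> K * \<delta> (Suc s) + (D - 1) * (K * D ^ s * \<delta> (Suc s))"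
  proof (cases "s = 0")
    case True
    have "0 \<le> (D - 1) * (K * \<delta> (Suc s))"
      using D(1) \<open>K \<ge> 0\<close> \<delta> by simp
    then show ?thesis
      using w[OF Suc.prems] True by simp
  next
    case False
    then have s: "s \<in> {1..CARD('n)}" "s \<in> {1..<CARD('n)}"
      using Suc.prems by auto
    have "norm (nest_supp w s) \<le> K * D ^ s * \<delta> s"
      using Suc.IH[OF s(1)] by (simp add: D_def add.commute)
    also have "\<dots> \<le> K * D ^ s * \<delta> (Suc s)"
      using \<delta>_mono[OF s(2)] \<open>K \<ge> 0\<close> D(2) by (intro mult_left_mono) auto
    finally have "norm (nest_supp w s) \<le> K * D ^ s * \<delta> (Suc s)" .
    then show ?thesis
      using w[OF Suc.prems] c \<open>K \<ge> 0\<close> \<delta> D(1)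
      by (intro add_mono mult_mono) auto
  qed
  also have "\<dots> \<le> K * D ^ Suc s * \<delta> (Suc s)"
  proof -
    have "K * \<delta> (Suc s) \<le> K * (D ^ s * \<delta> (Suc s))"
      using mult_right_mono[OF D(2) \<delta>] \<open>K \<ge> 0\<close> by (intro mult_left_mono) auto
    then show ?thesis
      by (simp add: algebra_simps)
  qed
  finally show ?case
    by (simp add: D_def algebra_simps)
qed simp
context based_lattice
begin

lemma short_nested_basis:
  obtains v where "lattice_basis L v"
    "\<And>s. s \<in> {1..CARD('n)} \<Longrightarrow>
      norm (v s) \<le> 2 * real CARD('n) * (real CARD('n) + 1) ^ CARD('n) * succ_min L s"
    "\<And>s. supp_vec (v s) \<subseteq> supp_vec (v (Suc s))"
proof -
  obtain w where L: "L = int_span w"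
    and w: "\<And>s. s \<in> {1..CARD('n)} \<Longrightarrow> norm (w s) \<le> 2 * real CARD('n) * succ_min L s"
    using short_generators by blast
  have "norm (nest_supp w s) \<le> 2 * real CARD('n) * (real CARD('n) + 1) ^ CARD('n) * succ_min L s"
    if s: "s \<in> {1..CARD('n)}" for s
  proof -
    have "norm (nest_supp w s) \<le> 2 * real CARD('n) * (real CARD('n) + 1) ^ s * succ_min L s"
      using w succ_min_pos succ_min_mono s by (intro norm_nest_supp_le) (auto simp: less_imp_le)
    also have "\<dots> \<le> 2 * real CARD('n) * (real CARD('n) + 1) ^ CARD('n) * succ_min L s"
      using s succ_min_pos[of s] by (intro mult_right_mono mult_left_mono power_increasing) auto
    finally show ?thesis .
  qed
  moreover have "lattice_basis L (nest_supp w)"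
    using L by (intro lattice_basis_of_int_span) (simp add: int_span_nest_supp)
  ultimately show ?thesis
    using that supp_nest_supp_mono by blast
qed

end

theorem mainTheorem7:
  shows "\<exists>C > 0. \<forall>L :: (real^'n) set. full_rank_lattice L \<longrightarrow>
           (\<exists>v. lattice_basis L v \<and>
                (\<forall>s\<in>{1..CARD('n)}. norm (v s) \<le> C * succ_min L s) \<and>
                (\<forall>s\<in>{1..<CARD('n)}. supp_vec (v s) \<subseteq> supp_vec (v (Suc s))))"
proof (intro exI[of _ "2 * real CARD('n) * (real CARD('n) + 1) ^ CARD('n)"] conjI allI impI)
  fix L :: "(real^'n) set"
  assume "full_rank_lattice L"
  then obtain b where "lattice_basis L b"
    unfolding full_rank_lattice_def by blast
  then interpret based_lattice b L
    by (simp add: based_lattice_def based_lattice_axioms_def lattice_basis_iff_frame)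
  obtain v where "lattice_basis L v"
    "\<And>s. s \<in> {1..CARD('n)} \<Longrightarrow>
      norm (v s) \<le> 2 * real CARD('n) * (real CARD('n) + 1) ^ CARD('n) * succ_min L s"
    "\<And>s. supp_vec (v s) \<subseteq> supp_vec (v (Suc s))"
    using short_nested_basis by blast
  then show "\<exists>v. lattice_basis L v \<and>
      (\<forall>s\<in>{1..CARD('n)}. norm (v s) \<le> 2 * real CARD('n) * (real CARD('n) + 1) ^ CARD('n) * succ_min L s) \<and>
      (\<forall>s\<in>{1..<CARD('n)}. supp_vec (v s) \<subseteq> supp_vec (v (Suc s)))"
    by blast
qed simp

end
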